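(* (i) For $g\ge1$, $H_0(\mathsf{Sp}(2g,2),Y)=0$ and $H_0(\mathsf{Sp}(2g,2),U)=0$. (ii) For $g\ge2$, $H_0(\mathsf{Sp}(2g,2),Z)=0$ and $H_0(\mathsf{Sp}(2g,2),\mathfrak{sp}(2g,2))=0$.
   Context: $\mathsf{Sp}(2g,2)$ is the symplectic group over $\mathbb F_2$ for the form $J=\begin{pmatrix}0&I\\-I&0\end{pmatrix}$, $U=\mathbb F_2^{2g}$ its natural module. $\mathfrak{sp}(2g,2)$ is the $\mathbb F_2$-space of matrices $\begin{pmatrix}\mathrm a&\mathrm b\\\mathrm c&\mathrm a^t\end{pmatrix}$ over $\mathbb F_2$ with $\mathrm b,\mathrm c$ symmetric $g\times g$, with $\mathsf{Sp}(2g,2)$ acting by conjugation. $Y\subseteq\mathfrak{sp}(2g,2)$ is the submodule of such matrices with $\mathsf{Diag}(\mathrm b)=\mathsf{Diag}(\mathrm c)=0$ and $\mathsf{Tr}(\mathrm a)=0$, and $Z=\mathfrak{sp}(2g,2)/Y$ (of dimension $2g+1$). $H_0(G,M)$ denotes the coinvariants $M/\langle gm-m\rangle$. *)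

theory Defs
  imports "HOL-Library.Z2" "Jordan_Normal_Form.Matrix"
begin

text \<open>F_2 is the field type bit. Matrices/vectors are Jordan_Normal_Form matrices/vectors
  with explicit dimensions; indices 0..g-1 are the first block, g..2g-1 the second.\<close>

definition Jform :: "nat \<Rightarrow> bit mat" where
  "Jform g = mat (2*g) (2*g) (\<lambda>(i,j).
      if i < g \<and> j = i + g then 1 else if g \<le> i \<and> j + g = i then - 1 else 0)"

definition Sp2 :: "nat \<Rightarrow> bit mat set" where
  "Sp2 g = {A \<in> carrier_mat (2*g) (2*g). transpose_mat A * Jform g * A = Jform g}"

text \<open>sp(2g,2): block matrices (a b; c a^t) with b, c symmetric.\<close>
definition sp2 :: "nat \<Rightarrow> bit mat set" where
  "sp2 g = {X \<in> carrier_mat (2*g) (2*g).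
     (\<forall>i<g. \<forall>j<g. X $$ (i+g, j+g) = X $$ (j, i)
                  \<and> X $$ (i, j+g) = X $$ (j, i+g)
                  \<and> X $$ (i+g, j) = X $$ (j+g, i))}"

definition Ysub :: "nat \<Rightarrow> bit mat set" where
  "Ysub g = {X \<in> sp2 g. (\<forall>i<g. X $$ (i, i+g) = 0 \<and> X $$ (i+g, i) = 0)
                       \<and> (\<Sum>i<g. X $$ (i, i)) = 0}"

text \<open>F_2-span (= additive closure, since the scalars are 0 and 1) of a set S,
  with zero element z.\<close>
inductive_set f2_span :: "'a \<Rightarrow> 'a set \<Rightarrow> ('a::plus) set" for z S where
  zero: "z \<in> f2_span z S"
| add: "x \<in> S \<Longrightarrow> y \<in> f2_span z S \<Longrightarrow> x + y \<in> f2_span z S"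

text \<open>Generators g.m - m of the coinvariant relations, for the conjugation action on matrices
  (A X A^{-1}) and the natural action on U.\<close>
definition conj_rel :: "nat \<Rightarrow> bit mat set \<Rightarrow> bit mat set" where
  "conj_rel g M = {A * X * B - X | A B X. A \<in> Sp2 g \<and> B \<in> carrier_mat (2*g) (2*g)
                      \<and> A * B = 1\<^sub>m (2*g) \<and> X \<in> M}"

definition nat_rel :: "nat \<Rightarrow> bit vec set" where
  "nat_rel g = {A *\<^sub>v v - v | A v. A \<in> Sp2 g \<and> v \<in> carrier_vec (2*g)}"

text \<open>H_0(G,M) = 0 means M is spanned by the g.m - m.\<close>
definition H0_conj_zero :: "nat \<Rightarrow> bit mat set \<Rightarrow> bool" where
  "H0_conj_zero g M \<longleftrightarrow> M \<subseteq> f2_span (0\<^sub>m (2*g) (2*g)) (conj_rel g M)"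

definition H0_U_zero :: "nat \<Rightarrow> bool" where
  "H0_U_zero g \<longleftrightarrow> carrier_vec (2*g) \<subseteq> f2_span (0\<^sub>v (2*g)) (nat_rel g)"

text \<open>H_0(G, M/N) = 0 for the quotient module Z = sp/Y: every element of M is congruent
  mod N to an element of the span of the X' - X (images of g.[X]-[X]).\<close>
definition H0_conj_quot_zero :: "nat \<Rightarrow> bit mat set \<Rightarrow> bit mat set \<Rightarrow> bool" where
  "H0_conj_quot_zero g M N \<longleftrightarrow>
     (\<forall>X\<in>M. \<exists>W\<in>f2_span (0\<^sub>m (2*g) (2*g)) (conj_rel g M). X - W \<in> N)"

end

theory Submission
  imports Defs
begin

text \<open>Every generator of each module lies in the span of the elements \<open>T X T - X\<close>, where
  \<open>T = T\<^sub>u\<close>, \<open>T\<^sub>u x = x + \<omega>(u,x) u\<close>, is a symplectic transvection (an involution in \<open>Sp(2g,2)\<close>).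
  For \<open>U\<close>, \<open>T\<^sub>v w - w = v\<close> as soon as \<open>\<omega>(v,w) = 1\<close>. For matrices, taking \<open>u\<close> a unit vector or
  a sum of two unit vectors and \<open>X\<close> an elementary element of \<open>sp(2g,2)\<close> produces the elementary
  elements \<open>E\<^sub>i\<^sub>,\<^sub>j\<^sub>' + E\<^sub>j\<^sub>,\<^sub>i\<^sub>'\<close> (\<open>j \<noteq> i, i'\<close>), the sums \<open>H\<^sub>p + H\<^sub>q\<close> of diagonal elements, and, when
  \<open>g \<ge> 2\<close>, also the single \<open>H\<^sub>p\<close> and the elements \<open>E\<^sub>p\<^sub>,\<^sub>p\<^sub>'\<close>. These span \<open>Y\<close>, respectively
  \<open>sp(2g,2)\<close>, which is shown by peeling them off an arbitrary element until it vanishes;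
  \<open>H\<^sub>p\<close> alone is not in \<open>Y\<close>, but the trace condition supplies a partner \<open>H\<^sub>q\<close>. Finally
  \<open>H\<^sub>0(sp) = 0\<close> trivially implies \<open>H\<^sub>0(sp/Y) = 0\<close>.\<close>

declare add_bit_eq_xor[simp del] mult_bit_eq_and[simp del]
declare sum_of_bool_eq[simp del] sum_mult_of_bool_eq[simp del] sum_of_bool_mult_eq[simp del]

lemma of_bool_add_bit[simp]: "of_bool P + of_bool Q = (of_bool (P \<noteq> Q) :: bit)"
  by auto

lemma of_bool_mult_bit[simp]: "of_bool P * of_bool Q = (of_bool (P \<and> Q) :: bit)"
  by auto

lemma sum_delta_mult': "(a::nat) < n \<Longrightarrow> (\<Sum>k<n. of_bool (a = k) * f k) = (f a :: 'a::semiring_1)"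
  by (simp add: of_bool_def if_distrib[of "\<lambda>x. x * _"] cong: if_cong)

lemma sum_delta_mult: "(a::nat) < n \<Longrightarrow> (\<Sum>k<n. of_bool (k = a) * f k) = (f a :: 'a::semiring_1)"
  by (simp add: of_bool_def if_distrib[of "\<lambda>x. x * _"] cong: if_cong)

lemma sum_mult_delta: "(a::nat) < n \<Longrightarrow> (\<Sum>k<n. f k * of_bool (k = a)) = (f a :: 'a::semiring_1)"
  by (simp add: of_bool_def if_distrib[of "\<lambda>x. _ * x"] cong: if_cong)

lemma mult3_mat_entry:
  assumes "A \<in> carrier_mat n n" "X \<in> carrier_mat n n" "B \<in> carrier_mat n n" "i < n" "j < n"
  shows "(A * X * B) $$ (i,j) = (\<Sum>k<n. \<Sum>l<n. A $$ (i,k) * X $$ (k,l) * B $$ (l,j))"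
proof -
  have "(A * X * B) $$ (i,j) = (\<Sum>k<n. A $$ (i,k) * (\<Sum>l<n. X $$ (k,l) * B $$ (l,j)))"
    using assms by (simp add: scalar_prod_def lessThan_atLeast0)
  also have "\<dots> = (\<Sum>k<n. \<Sum>l<n. A $$ (i,k) * X $$ (k,l) * B $$ (l,j))"
    by (simp add: sum_distrib_left mult.assoc)
  finally show ?thesis .
qed

text \<open>\<open>partner g i\<close> is the index \<open>i'\<close> paired with \<open>i\<close> by the form: \<open>J e\<^sub>i = e\<^sub>i\<^sub>'\<close>.\<close>
definition partner :: "nat \<Rightarrow> nat \<Rightarrow> nat" where
  "partner g i = (if i < g then i + g else i - g)"

lemma partner_less: "i < 2*g \<Longrightarrow> partner g i < 2*g"
  by (auto simp: partner_def)

lemma partner_partner: "i < 2*g \<Longrightarrow> partner g (partner g i) = i"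
  by (auto simp: partner_def)

lemma partner_eq_iff: "i < 2*g \<Longrightarrow> j < 2*g \<Longrightarrow> (partner g i = j) = (i = partner g j)"
  by (auto simp: partner_def)

lemma partner_neq: "i < 2*g \<Longrightarrow> partner g i \<noteq> i"
  by (auto simp: partner_def)

lemma partner_neq': "i < 2*g \<Longrightarrow> i \<noteq> partner g i"
  by (auto simp: partner_def)

lemmas partner_simps = partner_neq partner_neq' partner_eq_iff partner_partner partner_less

lemma Jform_carrier: "Jform g \<in> carrier_mat (2*g) (2*g)"
  by (simp add: Jform_def)

lemma Jform_entry: "k < 2*g \<Longrightarrow> l < 2*g \<Longrightarrow> Jform g $$ (k,l) = of_bool (l = partner g k)"
  by (auto simp: Jform_def partner_def)

lemma symplectic_form_alternating: "(\<Sum>k<2*g. u k * u (partner g k)) = (0::bit)"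
proof -
  have split: "{..<2*g} = {..<g} \<union> {g..<2*g}" by auto
  have "(\<Sum>k<2*g. u k * u (partner g k))
      = (\<Sum>k<g. u k * u (partner g k)) + (\<Sum>k\<in>{g..<2*g}. u k * u (partner g k))"
    unfolding split by (rule sum.union_disjoint) auto
  also have "(\<Sum>k\<in>{g..<2*g}. u k * u (partner g k)) = (\<Sum>k<g. u (k+g) * u (partner g (k+g)))"
    by (rule sum.reindex_bij_witness[of _ "\<lambda>k. k+g" "\<lambda>k. k - g"]) auto
  also have "\<dots> = (\<Sum>k<g. u k * u (partner g k))"
    by (rule sum.cong) (auto simp: partner_def mult.commute)
  finally show ?thesis by simp
qed

subsection \<open>Symplectic transvections\<close>

definition transvection :: "nat \<Rightarrow> (nat \<Rightarrow> bit) \<Rightarrow> bit mat" where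
  "transvection g u = mat (2*g) (2*g) (\<lambda>(i,k). of_bool (i = k) + u i * u (partner g k))"

lemma transvection_carrier: "transvection g u \<in> carrier_mat (2*g) (2*g)"
  by (simp add: transvection_def)

lemma transvection_involution: "transvection g u * transvection g u = 1\<^sub>m (2*g)"
proof (rule eq_matI)
  fix i j assume "i < dim_row (1\<^sub>m (2*g))" "j < dim_col (1\<^sub>m (2*g))"
  then have i: "i < 2*g" and j: "j < 2*g" by auto
  have "(transvection g u * transvection g u) $$ (i,j)
      = (\<Sum>k<2*g. (of_bool (i = k) + u i * u (partner g k)) * (of_bool (k = j) + u k * u (partner g j)))"
    using i j by (simp add: transvection_def scalar_prod_def lessThan_atLeast0)
  also have "\<dots> = (\<Sum>k<2*g. of_bool (i = k) * (of_bool (k = j) + u k * u (partner g j)))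
      + (\<Sum>k<2*g. of_bool (k = j) * (u i * u (partner g k)))
      + u i * u (partner g j) * (\<Sum>k<2*g. u k * u (partner g k))"
    by (simp add: algebra_simps sum.distrib sum_distrib_left)
  also have "\<dots> = of_bool (i = j)"
    using i j by (simp add: sum_delta_mult' sum_delta_mult symplectic_form_alternating)
  finally show "(transvection g u * transvection g u) $$ (i,j) = 1\<^sub>m (2*g) $$ (i,j)"
    using i j by simp
qed (auto simp: transvection_def)

lemma transvection_Sp2: "transvection g u \<in> Sp2 g"
  unfolding Sp2_def
proof (intro CollectI conjI transvection_carrier eq_matI)
  fix i j assume "i < dim_row (Jform g)" "j < dim_col (Jform g)"
  then have i: "i < 2*g" and j: "j < 2*g" by (auto simp: Jform_def)
  let ?T = "transvection g u"
  define P where "P k = of_bool (k = i) + u k * u (partner g i)" for k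
  define Q where "Q l = of_bool (l = j) + u l * u (partner g j)" for l
  have "(transpose_mat ?T * Jform g * ?T) $$ (i,j)
     = (\<Sum>k<2*g. \<Sum>l<2*g. transpose_mat ?T $$ (i,k) * Jform g $$ (k,l) * ?T $$ (l,j))"
    using i j by (intro mult3_mat_entry) (auto simp: transvection_carrier Jform_carrier)
  also have "\<dots> = (\<Sum>k<2*g. \<Sum>l<2*g. of_bool (l = partner g k) * (P k * Q l))"
    using i j by (intro sum.cong refl) (simp add: transvection_def Jform_entry P_def Q_def mult_ac)
  also have "\<dots> = (\<Sum>k<2*g. P k * Q (partner g k))"
    by (intro sum.cong refl) (simp add: sum_delta_mult partner_less)
  also have "\<dots> = (\<Sum>k<2*g. (of_bool (k = i) + u k * u (partner g i))
                    * (of_bool (k = partner g j) + u (partner g k) * u (partner g j)))"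
    using j by (intro sum.cong refl) (auto simp: P_def Q_def partner_eq_iff)
  also have "\<dots> = (\<Sum>k<2*g. of_bool (k = i) * (of_bool (k = partner g j) + u (partner g k) * u (partner g j)))
      + (\<Sum>k<2*g. of_bool (k = partner g j) * (u k * u (partner g i)))
      + u (partner g i) * u (partner g j) * (\<Sum>k<2*g. u k * u (partner g k))"
    by (simp add: algebra_simps sum.distrib sum_distrib_left)
  also have "\<dots> = of_bool (i = partner g j)"
    using i j partner_less[OF j]
    by (simp add: sum_delta_mult symplectic_form_alternating mult.commute[of "u (partner g j)"])
  finally show "(transpose_mat ?T * Jform g * ?T) $$ (i,j) = Jform g $$ (i,j)"
    using i j by (simp add: Jform_entry) (metis partner_eq_iff)
qed (auto simp: Jform_def transvection_def)

definition transvection_conj_diff :: "nat \<Rightarrow> (nat \<Rightarrow> bit) \<Rightarrow> bit mat \<Rightarrow> bit mat" where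
  "transvection_conj_diff g u X = mat (2*g) (2*g) (\<lambda>(i,j).
      u i * (\<Sum>k<2*g. u (partner g k) * X $$ (k,j))
      + (\<Sum>l<2*g. X $$ (i,l) * u l) * u (partner g j)
      + u i * (\<Sum>k<2*g. u (partner g k) * (\<Sum>l<2*g. X $$ (k,l) * u l)) * u (partner g j))"

lemma transvection_conj_minus:
  assumes X: "X \<in> carrier_mat (2*g) (2*g)"
  shows "transvection g u * X * transvection g u - X = transvection_conj_diff g u X"
proof (rule eq_matI)
  fix i j assume "i < dim_row (transvection_conj_diff g u X)" "j < dim_col (transvection_conj_diff g u X)"
  then have i: "i < 2*g" and j: "j < 2*g" by (auto simp: transvection_conj_diff_def)
  let ?T = "transvection g u"
  define P where "P k = of_bool (i = k) + u i * u (partner g k)" for k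
  define Q where "Q k = X $$ (k,j) + (\<Sum>l<2*g. X $$ (k,l) * u l) * u (partner g j)" for k
  have "(?T * X * ?T) $$ (i,j) = (\<Sum>k<2*g. \<Sum>l<2*g. ?T $$ (i,k) * X $$ (k,l) * ?T $$ (l,j))"
    using i j X by (intro mult3_mat_entry) (auto simp: transvection_carrier)
  also have "\<dots> = (\<Sum>k<2*g. \<Sum>l<2*g. P k * X $$ (k,l) * (of_bool (l = j) + u l * u (partner g j)))"
    using i j by (intro sum.cong refl) (simp add: transvection_def P_def)
  also have "\<dots> = (\<Sum>k<2*g. P k * Q k)"
  proof (intro sum.cong refl)
    fix k
    have "(\<Sum>l<2*g. P k * X $$ (k,l) * (of_bool (l = j) + u l * u (partner g j)))
       = P k * ((\<Sum>l<2*g. of_bool (l = j) * X $$ (k,l)) + (\<Sum>l<2*g. X $$ (k,l) * u l) * u (partner g j))"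
      by (simp add: algebra_simps sum.distrib sum_distrib_left sum_distrib_right)
    then show "(\<Sum>l<2*g. P k * X $$ (k,l) * (of_bool (l = j) + u l * u (partner g j))) = P k * Q k"
      using sum_delta_mult[OF j, of "\<lambda>l. X $$ (k,l)"] by (simp add: Q_def)
  qed
  also have "\<dots> = (\<Sum>k<2*g. of_bool (i = k) * Q k) + u i * (\<Sum>k<2*g. u (partner g k) * Q k)"
    by (simp add: P_def algebra_simps sum.distrib sum_distrib_left)
  also have "\<dots> = Q i + u i * (\<Sum>k<2*g. u (partner g k) * Q k)"
    by (simp add: sum_delta_mult'[OF i])
  also have "(\<Sum>k<2*g. u (partner g k) * Q k) = (\<Sum>k<2*g. u (partner g k) * X $$ (k,j))
       + (\<Sum>k<2*g. u (partner g k) * (\<Sum>l<2*g. X $$ (k,l) * u l)) * u (partner g j)"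
    by (simp add: Q_def algebra_simps sum.distrib sum_distrib_left sum_distrib_right)
  finally have "(?T * X * ?T) $$ (i,j) = X $$ (i,j) + transvection_conj_diff g u X $$ (i,j)"
    using i j by (simp add: Q_def transvection_conj_diff_def algebra_simps)
  then show "(?T * X * ?T - X) $$ (i,j) = transvection_conj_diff g u X $$ (i,j)"
    using i j X by (simp add: transvection_carrier)
qed (use X in \<open>auto simp: transvection_conj_diff_def transvection_def\<close>)

lemma transvection_conj_diff_in_conj_rel:
  assumes "X \<in> M" "M \<subseteq> carrier_mat (2*g) (2*g)"
  shows "transvection_conj_diff g u X \<in> conj_rel g M"
proof -
  have "transvection g u * X * transvection g u - X \<in> conj_rel g M"
    unfolding conj_rel_def
    using assms(1) transvection_Sp2 transvection_involution transvection_carrier by blast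
  then show ?thesis
    using assms transvection_conj_minus by (metis subsetD)
qed

definition basis_fn :: "nat \<Rightarrow> nat \<Rightarrow> bit" where
  "basis_fn p = (\<lambda>i. of_bool (i = p))"

definition basis_sum_fn :: "nat \<Rightarrow> nat \<Rightarrow> nat \<Rightarrow> bit" where
  "basis_sum_fn p q = (\<lambda>i. of_bool (i = p) + of_bool (i = q))"

lemma sum_partner_delta: "p < 2*g \<Longrightarrow> (\<Sum>k<2*g. of_bool (partner g k = p) * f k) = (f (partner g p) :: bit)"
proof -
  assume p: "p < 2*g"
  have "(\<Sum>k<2*g. of_bool (partner g k = p) * f k) = (\<Sum>k<2*g. of_bool (k = partner g p) * f k)"
    using p by (intro sum.cong refl) (simp add: partner_eq_iff)
  also have "\<dots> = f (partner g p)" by (rule sum_delta_mult[OF partner_less[OF p]])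
  finally show ?thesis .
qed

lemma transvection_conj_diff_basis:
  assumes "p < 2*g"
  shows "transvection_conj_diff g (basis_fn p) X = mat (2*g) (2*g) (\<lambda>(i,j).
      of_bool (i = p) * X $$ (partner g p, j) + X $$ (i,p) * of_bool (partner g j = p)
      + of_bool (i = p) * X $$ (partner g p, p) * of_bool (partner g j = p))"
  unfolding transvection_conj_diff_def basis_fn_def using assms
  by (intro eq_matI) (simp_all add: sum_partner_delta sum_mult_delta)

lemma transvection_conj_diff_basis_sum:
  assumes "p < 2*g" "q < 2*g"
  shows "transvection_conj_diff g (basis_sum_fn p q) X = mat (2*g) (2*g) (\<lambda>(i,j).
      (of_bool (i = p) + of_bool (i = q)) * (X $$ (partner g p, j) + X $$ (partner g q, j))
      + (X $$ (i,p) + X $$ (i,q)) * (of_bool (partner g j = p) + of_bool (partner g j = q))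
      + (of_bool (i = p) + of_bool (i = q))
         * (X $$ (partner g p, p) + X $$ (partner g p, q) + X $$ (partner g q, p) + X $$ (partner g q, q))
         * (of_bool (partner g j = p) + of_bool (partner g j = q)))"
  unfolding transvection_conj_diff_def basis_sum_fn_def using assms
  by (intro eq_matI)
    (simp_all del: of_bool_add_bit
      add: sum_partner_delta sum_mult_delta distrib_left distrib_right sum.distrib add.assoc)

subsection \<open>Elementary elements of the symplectic Lie algebra\<close>

text \<open>The Cartan element \<open>H\<^sub>p = E\<^sub>p\<^sub>,\<^sub>p + E\<^sub>p\<^sub>'\<^sub>,\<^sub>p\<^sub>'\<close> is \<open>pair_elem g p (partner g p)\<close>.\<close>
definition pair_elem :: "nat \<Rightarrow> nat \<Rightarrow> nat \<Rightarrow> bit mat" where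
  "pair_elem g i j = mat (2*g) (2*g) (\<lambda>(r,s).
     of_bool (r = i \<and> s = partner g j) + of_bool (r = j \<and> s = partner g i))"

definition diag_elem :: "nat \<Rightarrow> nat \<Rightarrow> bit mat" where
  "diag_elem g i = mat (2*g) (2*g) (\<lambda>(r,s). of_bool (r = i \<and> s = partner g i))"

lemma pair_elem_carrier[simp]: "pair_elem g i j \<in> carrier_mat (2*g) (2*g)"
  by (simp add: pair_elem_def)

lemma diag_elem_carrier[simp]: "diag_elem g i \<in> carrier_mat (2*g) (2*g)"
  by (simp add: diag_elem_def)

lemma transvection_conj_diff_pair_elem:
  assumes "p < 2*g" "k < 2*g" "k \<noteq> p" "k \<noteq> partner g p"
  shows "transvection_conj_diff g (basis_fn p) (pair_elem g (partner g p) k) = pair_elem g p k"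
  using assms partner_less[of p g]
  by (subst transvection_conj_diff_basis) (auto simp: pair_elem_def partner_simps intro!: eq_matI)

lemma transvection_conj_diff_diag_elem:
  assumes "p < 2*g"
  shows "transvection_conj_diff g (basis_fn p) (diag_elem g (partner g p))
    = pair_elem g p (partner g p) + diag_elem g p"
  using assms partner_less[of p g]
  by (subst transvection_conj_diff_basis) (auto simp: pair_elem_def diag_elem_def partner_simps intro!: eq_matI)

lemma transvection_conj_diff_sum_pair_elem:
  assumes "p < 2*g" "q < 2*g" "q \<noteq> p" "q \<noteq> partner g p"
  shows "transvection_conj_diff g (basis_sum_fn p q) (pair_elem g (partner g p) (partner g q))
    = pair_elem g p (partner g p) + pair_elem g q (partner g q) + pair_elem g p (partner g q)
      + pair_elem g q (partner g p)"
  using assms partner_less[of p g] partner_less[of q g]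
  by (subst transvection_conj_diff_basis_sum) (auto simp: pair_elem_def partner_simps intro!: eq_matI)

lemma transvection_conj_diff_sum_diag_elem:
  assumes "p < 2*g" "q < 2*g" "q \<noteq> p" "q \<noteq> partner g p"
  shows "transvection_conj_diff g (basis_sum_fn p q) (diag_elem g (partner g p))
    = pair_elem g p (partner g p) + diag_elem g p + diag_elem g q + pair_elem g q (partner g p)
      + pair_elem g p q"
  using assms partner_less[of p g] partner_less[of q g]
  by (subst transvection_conj_diff_basis_sum)
    (auto simp: pair_elem_def diag_elem_def partner_simps intro!: eq_matI)

lemma sp2_iff_partner_sym:
  assumes "X \<in> carrier_mat (2*g) (2*g)"
  shows "X \<in> sp2 g \<longleftrightarrow> (\<forall>r<2*g. \<forall>s<2*g. X $$ (r, partner g s) = X $$ (s, partner g r))"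
proof
  assume X: "X \<in> sp2 g"
  show "\<forall>r<2*g. \<forall>s<2*g. X $$ (r, partner g s) = X $$ (s, partner g r)"
  proof (intro allI impI)
    fix r s assume r: "r < 2*g" and s: "s < 2*g"
    have split: "\<exists>a<g. x = a \<or> x = a + g" if "x < 2*g" for x
      using that by (cases "x < g") (auto intro: exI[of _ "x - g"])
    obtain a b where "a < g" "b < g" "r = a \<or> r = a + g" "s = b \<or> s = b + g"
      using split[OF r] split[OF s] by blast
    then show "X $$ (r, partner g s) = X $$ (s, partner g r)"
      using X unfolding sp2_def partner_def by auto
  qed
next
  assume H: "\<forall>r<2*g. \<forall>s<2*g. X $$ (r, partner g s) = X $$ (s, partner g r)"
  show "X \<in> sp2 g" unfolding sp2_def
  proof (intro CollectI conjI assms allI impI)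
    fix i j assume i: "i < g" and j: "j < g"
    show "X $$ (i + g, j + g) = X $$ (j, i)" using H[rule_format, of "i+g" j] i j by (simp add: partner_def)
    show "X $$ (i, j + g) = X $$ (j, i + g)" using H[rule_format, of i j] i j by (simp add: partner_def)
    show "X $$ (i + g, j) = X $$ (j + g, i)" using H[rule_format, of "i+g" "j+g"] i j by (simp add: partner_def)
  qed
qed

lemma sp2_carrier: "sp2 g \<subseteq> carrier_mat (2*g) (2*g)"
  by (auto simp: sp2_def)

lemma sp2_partner_sym: "X \<in> sp2 g \<Longrightarrow> r < 2*g \<Longrightarrow> s < 2*g \<Longrightarrow> X $$ (r, partner g s) = X $$ (s, partner g r)"
  using sp2_iff_partner_sym sp2_carrier by blast

lemma sp2_add: "X \<in> sp2 g \<Longrightarrow> Y \<in> sp2 g \<Longrightarrow> X + Y \<in> sp2 g"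
  unfolding sp2_def by auto

lemma pair_elem_sp2: "i < 2*g \<Longrightarrow> j < 2*g \<Longrightarrow> pair_elem g i j \<in> sp2 g"
  by (subst sp2_iff_partner_sym) (auto simp: pair_elem_def partner_simps)

lemma diag_elem_sp2: "i < 2*g \<Longrightarrow> diag_elem g i \<in> sp2 g"
  by (subst sp2_iff_partner_sym) (auto simp: diag_elem_def partner_simps)

lemma Ysub_sp2: "Ysub g \<subseteq> sp2 g"
  by (auto simp: Ysub_def)

lemma Ysub_carrier: "Ysub g \<subseteq> carrier_mat (2*g) (2*g)"
  using Ysub_sp2 sp2_carrier by blast

lemma Ysub_partner_entry: "X \<in> Ysub g \<Longrightarrow> r < 2*g \<Longrightarrow> X $$ (r, partner g r) = 0"
  by (cases "r < g") (auto simp: Ysub_def partner_def dest!: spec[of _ "r - g"])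

lemma YsubI:
  assumes "X \<in> sp2 g" "\<And>r. r < 2*g \<Longrightarrow> X $$ (r, partner g r) = 0" "(\<Sum>i<g. X $$ (i,i)) = 0"
  shows "X \<in> Ysub g"
  unfolding Ysub_def
proof (intro CollectI conjI assms allI impI)
  fix i assume "i < g"
  then show "X $$ (i, i + g) = 0" "X $$ (i + g, i) = 0"
    using assms(2)[of i] assms(2)[of "i+g"] by (auto simp: partner_def)
qed

lemma Ysub_trace: "X \<in> Ysub g \<Longrightarrow> (\<Sum>i<g. X $$ (i,i)) = 0"
  by (simp add: Ysub_def)

lemma trace_add:
  assumes "X \<in> carrier_mat (2*g) (2*g)" "Y \<in> carrier_mat (2*g) (2*g)"
  shows "(\<Sum>i<g. (X + Y) $$ (i,i)) = (\<Sum>i<g. X $$ (i,i)) + (\<Sum>i<g. Y $$ (i,i))"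
  using assms by (simp add: sum.distrib)

lemma Ysub_add: assumes "X \<in> Ysub g" "Y \<in> Ysub g" shows "X + Y \<in> Ysub g"
proof (rule YsubI)
  show "X + Y \<in> sp2 g" using assms Ysub_sp2 sp2_add by blast
  have c: "X \<in> carrier_mat (2*g) (2*g)" "Y \<in> carrier_mat (2*g) (2*g)"
    using assms Ysub_carrier by auto
  show "(X + Y) $$ (r, partner g r) = 0" if "r < 2*g" for r
    using c that assms partner_less[OF that] by (simp add: Ysub_partner_entry)
  show "(\<Sum>i<g. (X + Y) $$ (i,i)) = 0"
    using assms by (simp add: trace_add[OF c] Ysub_trace)
qed

lemma zero_Ysub: "0\<^sub>m (2*g) (2*g) \<in> Ysub g"
  by (rule YsubI) (auto simp: sp2_def partner_less)

lemma pair_elem_Ysub: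
  assumes "i < 2*g" "j < 2*g" "j \<noteq> partner g i"
  shows "pair_elem g i j \<in> Ysub g"
proof (rule YsubI)
  show "pair_elem g i j \<in> sp2 g" using assms(1,2) by (rule pair_elem_sp2)
  show "pair_elem g i j $$ (r, partner g r) = 0" if "r < 2*g" for r
    using that assms by (auto simp: pair_elem_def partner_simps)
  show "(\<Sum>k<g. pair_elem g i j $$ (k,k)) = 0"
    using assms by (intro sum.neutral) (auto simp: pair_elem_def partner_simps)
qed

lemma trace_cartan_elem:
  assumes "p < g"
  shows "(\<Sum>k<g. pair_elem g p (partner g p) $$ (k,k)) = 1"
proof -
  have "(\<Sum>k<g. pair_elem g p (partner g p) $$ (k,k)) = (\<Sum>k<g. of_bool (k = p) * 1)"
    using assms by (intro sum.cong refl) (auto simp: pair_elem_def partner_def)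
  also have "\<dots> = 1" by (rule sum_delta_mult[OF assms])
  finally show ?thesis .
qed

lemma cartan_sum_Ysub:
  assumes "p < g" "q < g"
  shows "pair_elem g p (partner g p) + pair_elem g q (partner g q) \<in> Ysub g"
proof (rule YsubI)
  have pq: "p < 2*g" "q < 2*g" using assms by auto
  show "pair_elem g p (partner g p) + pair_elem g q (partner g q) \<in> sp2 g"
    using pq by (intro sp2_add pair_elem_sp2 partner_less)
  show "(pair_elem g p (partner g p) + pair_elem g q (partner g q)) $$ (r, partner g r) = 0"
    if "r < 2*g" for r
    using that pq by (auto simp: pair_elem_def partner_simps)
  show "(\<Sum>k<g. (pair_elem g p (partner g p) + pair_elem g q (partner g q)) $$ (k,k)) = 0"
  proof -
    have "(\<Sum>k<g. (pair_elem g p (partner g p) + pair_elem g q (partner g q)) $$ (k,k))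
        = (\<Sum>k<g. pair_elem g p (partner g p) $$ (k,k)) + (\<Sum>k<g. pair_elem g q (partner g q) $$ (k,k))"
      by (rule trace_add) simp_all
    then show ?thesis using trace_cartan_elem[OF assms(1)] trace_cartan_elem[OF assms(2)] by simp
  qed
qed

subsection \<open>The span of the coinvariant relations\<close>

abbreviation coinv_span :: "nat \<Rightarrow> bit mat set \<Rightarrow> bit mat set" where
  "coinv_span g M \<equiv> f2_span (0\<^sub>m (2*g) (2*g)) (conj_rel g M)"

lemma conj_rel_carrier:
  "M \<subseteq> carrier_mat (2*g) (2*g) \<Longrightarrow> conj_rel g M \<subseteq> carrier_mat (2*g) (2*g)"
  unfolding conj_rel_def Sp2_def by (auto intro!: minus_carrier_mat)

lemma coinv_span_carrier:
  assumes "M \<subseteq> carrier_mat (2*g) (2*g)"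
  shows "x \<in> coinv_span g M \<Longrightarrow> x \<in> carrier_mat (2*g) (2*g)"
  by (induction rule: f2_span.induct) (use conj_rel_carrier[OF assms] in auto)

lemma coinv_span_add:
  assumes M: "M \<subseteq> carrier_mat (2*g) (2*g)"
  shows "x \<in> coinv_span g M \<Longrightarrow> y \<in> coinv_span g M \<Longrightarrow> x + y \<in> coinv_span g M"
proof (induction rule: f2_span.induct)
  case zero
  then show ?case using coinv_span_carrier[OF M] by simp
next
  case (add a x)
  have "a \<in> carrier_mat (2*g) (2*g)" "x \<in> carrier_mat (2*g) (2*g)" "y \<in> carrier_mat (2*g) (2*g)"
    using add conj_rel_carrier[OF M] coinv_span_carrier[OF M] by auto
  then have "a + x + y = a + (x + y)" by (rule assoc_add_mat)
  then show ?case using add by (simp add: f2_span.add)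
qed

lemma conj_rel_in_coinv_span:
  assumes "M \<subseteq> carrier_mat (2*g) (2*g)" "x \<in> conj_rel g M"
  shows "x \<in> coinv_span g M"
proof -
  have "x \<in> carrier_mat (2*g) (2*g)" using conj_rel_carrier assms by blast
  moreover have "x + 0\<^sub>m (2*g) (2*g) \<in> coinv_span g M"
    using assms(2) by (intro f2_span.add f2_span.zero)
  ultimately show ?thesis by simp
qed

lemma coinv_span_mono:
  assumes "M \<subseteq> M'"
  shows "x \<in> coinv_span g M \<Longrightarrow> x \<in> coinv_span g M'"
proof (induction rule: f2_span.induct)
  case zero
  then show ?case by (rule f2_span.zero)
next
  case (add a y)
  then have "a \<in> conj_rel g M'" using assms unfolding conj_rel_def by blast
  then show ?case using add by (simp add: f2_span.add)
qed

lemma coinv_span_cancel: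
  assumes M: "M \<subseteq> carrier_mat (2*g) (2*g)"
    and "x + y \<in> coinv_span g M" "y \<in> coinv_span g M" "x \<in> carrier_mat (2*g) (2*g)"
  shows "x \<in> coinv_span g M"
proof -
  have "x + y + y \<in> coinv_span g M"
    using coinv_span_add[OF M] assms(2,3) by blast
  moreover have "y \<in> carrier_mat (2*g) (2*g)"
    using coinv_span_carrier[OF M assms(3)] .
  then have "x + y + y = x"
    using assms(4) by (intro eq_matI) auto
  ultimately show ?thesis by simp
qed

lemma transvection_conj_diff_in_coinv_span:
  "X \<in> M \<Longrightarrow> M \<subseteq> carrier_mat (2*g) (2*g) \<Longrightarrow> transvection_conj_diff g u X \<in> coinv_span g M"
  by (simp add: transvection_conj_diff_in_conj_rel conj_rel_in_coinv_span)

lemma pair_elem_in_coinv_span_Ysub: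
  assumes "p < 2*g" "k < 2*g" "k \<noteq> p" "k \<noteq> partner g p"
  shows "pair_elem g p k \<in> coinv_span g (Ysub g)"
proof -
  have "pair_elem g (partner g p) k \<in> Ysub g"
    using assms by (intro pair_elem_Ysub) (auto simp: partner_simps)
  then have "transvection_conj_diff g (basis_fn p) (pair_elem g (partner g p) k) \<in> coinv_span g (Ysub g)"
    using Ysub_carrier by (rule transvection_conj_diff_in_coinv_span)
  then show ?thesis by (simp only: transvection_conj_diff_pair_elem[OF assms])
qed

lemma cartan_sum_in_coinv_span_Ysub:
  assumes "p < 2*g" "q < 2*g" "q \<noteq> p" "q \<noteq> partner g p"
  shows "pair_elem g p (partner g p) + pair_elem g q (partner g q) \<in> coinv_span g (Ysub g)"
proof -
  let ?V = "coinv_span g (Ysub g)"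
  have "pair_elem g (partner g p) (partner g q) \<in> Ysub g"
    using assms by (intro pair_elem_Ysub) (auto simp: partner_simps)
  then have "transvection_conj_diff g (basis_sum_fn p q) (pair_elem g (partner g p) (partner g q)) \<in> ?V"
    using Ysub_carrier by (rule transvection_conj_diff_in_coinv_span)
  then have sum4: "pair_elem g p (partner g p) + pair_elem g q (partner g q) + pair_elem g p (partner g q)
      + pair_elem g q (partner g p) \<in> ?V"
    by (simp only: transvection_conj_diff_sum_pair_elem[OF assms])
  have pq: "pair_elem g p (partner g q) \<in> ?V" and qp: "pair_elem g q (partner g p) \<in> ?V"
    using assms by (auto intro!: pair_elem_in_coinv_span_Ysub simp: partner_simps)
  have "pair_elem g p (partner g p) + pair_elem g q (partner g q) + pair_elem g p (partner g q) \<in> ?V"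
    by (rule coinv_span_cancel[OF Ysub_carrier sum4 qp]) simp
  then show ?thesis
    by (rule coinv_span_cancel[OF Ysub_carrier _ pq]) simp
qed

lemma cartan_plus_diag_in_coinv_span_sp2:
  assumes "p < 2*g"
  shows "pair_elem g p (partner g p) + diag_elem g p \<in> coinv_span g (sp2 g)"
  using transvection_conj_diff_in_coinv_span[OF diag_elem_sp2[OF partner_less[OF assms]] sp2_carrier,
      where u = "basis_fn p"]
  by (simp only: transvection_conj_diff_diag_elem[OF assms])

text \<open>Here \<open>g \<ge> 2\<close> is needed: the proof uses an index \<open>p\<close> different from both \<open>q\<close> and \<open>q'\<close>.\<close>
lemma diag_elem_in_coinv_span_sp2:
  assumes g: "g \<ge> 2" and q: "q < 2*g"
  shows "diag_elem g q \<in> coinv_span g (sp2 g)"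
proof -
  let ?V = "coinv_span g (sp2 g)"
  define p where "p = (if q = 0 \<or> q = g then 1 else (0::nat))"
  have p: "p < 2*g" "q \<noteq> p" "q \<noteq> partner g p" using g q by (auto simp: p_def partner_def)
  have sum5: "pair_elem g p (partner g p) + diag_elem g p + diag_elem g q + pair_elem g q (partner g p)
      + pair_elem g p q \<in> ?V"
    using transvection_conj_diff_in_coinv_span[OF diag_elem_sp2[OF partner_less[OF p(1)]] sp2_carrier,
        where u = "basis_sum_fn p q"]
    by (simp only: transvection_conj_diff_sum_diag_elem[OF p(1) q p(2,3)])
  have pq: "pair_elem g p q \<in> ?V" and qp: "pair_elem g q (partner g p) \<in> ?V"
    using p q by (auto intro!: coinv_span_mono[OF Ysub_sp2] pair_elem_in_coinv_span_Ysub
        simp: partner_simps)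
  have "pair_elem g p (partner g p) + diag_elem g p + diag_elem g q + pair_elem g q (partner g p) \<in> ?V"
    by (rule coinv_span_cancel[OF sp2_carrier sum5 pq]) simp
  then have "pair_elem g p (partner g p) + diag_elem g p + diag_elem g q \<in> ?V"
    by (rule coinv_span_cancel[OF sp2_carrier _ qp]) simp
  moreover have "pair_elem g p (partner g p) + diag_elem g p + diag_elem g q
      = diag_elem g q + (pair_elem g p (partner g p) + diag_elem g p)"
    by (intro eq_matI) (simp_all add: pair_elem_def diag_elem_def add_ac del: of_bool_add_bit)
  ultimately have "diag_elem g q + (pair_elem g p (partner g p) + diag_elem g p) \<in> ?V"
    by simp
  then show ?thesis
    by (rule coinv_span_cancel[OF sp2_carrier _ cartan_plus_diag_in_coinv_span_sp2[OF p(1)]]) simp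
qed

lemma cartan_elem_in_coinv_span_sp2:
  "g \<ge> 2 \<Longrightarrow> p < 2*g \<Longrightarrow> pair_elem g p (partner g p) \<in> coinv_span g (sp2 g)"
  by (rule coinv_span_cancel[OF sp2_carrier cartan_plus_diag_in_coinv_span_sp2
        diag_elem_in_coinv_span_sp2]) auto

subsection \<open>Spanning by descent on the support\<close>

definition supp :: "nat \<Rightarrow> bit mat \<Rightarrow> (nat \<times> nat) set" where
  "supp g X = {(r,s). r < 2*g \<and> s < 2*g \<and> X $$ (r,s) = 1}"

lemma finite_supp: "finite (supp g X)"
  by (rule finite_subset[of _ "{..<2*g} \<times> {..<2*g}"]) (auto simp: supp_def)

lemma supp_empty_imp_zero:
  "X \<in> carrier_mat (2*g) (2*g) \<Longrightarrow> supp g X = {} \<Longrightarrow> X = 0\<^sub>m (2*g) (2*g)"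
  by (intro eq_matI) (auto simp: supp_def)

lemma supp_add_subset:
  assumes "X \<in> carrier_mat (2*g) (2*g)" "B \<in> carrier_mat (2*g) (2*g)"
  shows "supp g (X + B) \<subseteq> supp g X \<union> supp g B"
  using assms by (auto simp: supp_def)

lemma supp_add_of_subset:
  assumes "X \<in> carrier_mat (2*g) (2*g)" "B \<in> carrier_mat (2*g) (2*g)" "supp g B \<subseteq> supp g X"
  shows "supp g (X + B) = supp g X - supp g B"
  using assms by (fastforce simp: supp_def)

lemma subset_coinv_span_by_descent:
  assumes M: "M \<subseteq> carrier_mat (2*g) (2*g)"
    and step: "\<And>X r s. X \<in> M \<Longrightarrow> (r,s) \<in> supp g X \<Longrightarrow>
      \<exists>B \<in> coinv_span g M. X + B \<in> M \<and> (r,s) \<in> supp g B \<and> supp g B \<subseteq> supp g X"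
  shows "M \<subseteq> coinv_span g M"
proof
  fix X assume "X \<in> M"
  then show "X \<in> coinv_span g M"
  proof (induction "card (supp g X)" arbitrary: X rule: less_induct)
    case less
    have X: "X \<in> carrier_mat (2*g) (2*g)" using less.prems M by blast
    show ?case
    proof (cases "supp g X = {}")
      case True
      then show ?thesis using supp_empty_imp_zero[OF X] f2_span.zero by simp
    next
      case False
      then obtain r s where "(r,s) \<in> supp g X" by auto
      then obtain B where B: "B \<in> coinv_span g M" "X + B \<in> M" "(r,s) \<in> supp g B"
        "supp g B \<subseteq> supp g X"
        using step[OF less.prems] by blast
      have "supp g (X + B) = supp g X - supp g B"
        using supp_add_of_subset[OF X coinv_span_carrier[OF M B(1)] B(4)] .
      then have "supp g (X + B) \<subset> supp g X" using B(3,4) by blast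
      then have "card (supp g (X + B)) < card (supp g X)"
        by (rule psubset_card_mono[OF finite_supp])
      then have "X + B \<in> coinv_span g M" using less.hyps B(2) by blast
      then show ?thesis by (rule coinv_span_cancel[OF M _ B(1) X])
    qed
  qed
qed

lemma supp_pair_elem_subset:
  assumes X: "X \<in> sp2 g" and rs: "(r,s) \<in> supp g X" and n: "s \<noteq> partner g r"
  shows "(r,s) \<in> supp g (pair_elem g r (partner g s)) \<and> supp g (pair_elem g r (partner g s)) \<subseteq> supp g X"
proof -
  have r: "r < 2*g" and s: "s < 2*g" and x: "X $$ (r,s) = 1" using rs by (auto simp: supp_def)
  have "X $$ (partner g s, partner g r) = X $$ (r, s)"
    using sp2_partner_sym[OF X partner_less[OF s] r] partner_partner[OF s] by simp
  then show ?thesis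
    using r s x n partner_less[OF s] partner_less[OF r]
    by (auto simp: supp_def pair_elem_def partner_simps)
qed

lemma bit_sum_zero_imp_other_one:
  assumes "(\<Sum>i<(n::nat). f i) = (0::bit)" "p < n" "f p = 1"
  shows "\<exists>k<n. k \<noteq> p \<and> f k = 1"
proof (rule ccontr)
  assume "\<not> ?thesis"
  then have "(\<Sum>i\<in>{..<n} - {p}. f i) = 0" by (intro sum.neutral) auto
  moreover have "(\<Sum>i<n. f i) = f p + (\<Sum>i\<in>{..<n} - {p}. f i)"
    using assms(2) by (subst sum.remove[of _ p]) auto
  ultimately show False using assms by simp
qed

text \<open>An entry \<open>(r,r)\<close> of \<open>X \<in> Y\<close> cannot be removed by \<open>H\<^sub>r \<notin> Y\<close> alone; the trace condition
  provides a second diagonal entry \<open>(k,k)\<close> of the first block, and \<open>H\<^sub>r + H\<^sub>k\<close> is used instead.\<close>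
lemma Ysub_subset_coinv_span: "Ysub g \<subseteq> coinv_span g (Ysub g)"
proof (rule subset_coinv_span_by_descent[OF Ysub_carrier])
  fix X r s assume X: "X \<in> Ysub g" and rs: "(r,s) \<in> supp g X"
  have Xs: "X \<in> sp2 g" using X Ysub_sp2 by blast
  have r: "r < 2*g" and s: "s < 2*g" using rs by (auto simp: supp_def)
  have n: "s \<noteq> partner g r" using Ysub_partner_entry[OF X r] rs by (auto simp: supp_def)
  let ?H = "\<lambda>p. pair_elem g p (partner g p)"
  show "\<exists>B \<in> coinv_span g (Ysub g). X + B \<in> Ysub g \<and> (r,s) \<in> supp g B \<and> supp g B \<subseteq> supp g X"
  proof (cases "s = r")
    case False
    have j: "partner g s \<noteq> r" "partner g s \<noteq> partner g r" using n False r s by (auto simp: partner_simps)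
    have "pair_elem g r (partner g s) \<in> coinv_span g (Ysub g)"
      using pair_elem_in_coinv_span_Ysub[OF r partner_less[OF s] j] .
    moreover have "pair_elem g r (partner g s) \<in> Ysub g"
      using r partner_less[OF s] j(2) by (intro pair_elem_Ysub) auto
    ultimately show ?thesis using supp_pair_elem_subset[OF Xs rs n] Ysub_add[OF X] by blast
  next
    case True
    define r0 where "r0 = (if r < g then r else r - g)"
    have r0: "r0 < g" "r = r0 \<or> r = partner g r0" using r by (auto simp: r0_def partner_def)
    have r02: "r0 < 2*g" using r0 by simp
    have "(r0, r0) \<in> supp g X"
      using r0(2) rs True r02 sp2_partner_sym[OF Xs partner_less[OF r02] r02] partner_partner[OF r02]
      by (auto simp: supp_def)
    then obtain k where k: "k < g" "k \<noteq> r0" "(k,k) \<in> supp g X"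
      using bit_sum_zero_imp_other_one[OF Ysub_trace[OF X] r0(1)] by (auto simp: supp_def)
    have k2: "k < 2*g" and ks: "k \<noteq> partner g r0" using k r0 by (auto simp: partner_def)
    have "supp g (?H r0 + ?H k) \<subseteq> supp g (?H r0) \<union> supp g (?H k)"
      by (rule supp_add_subset) simp_all
    also have "\<dots> \<subseteq> supp g X"
      using supp_pair_elem_subset[OF Xs \<open>(r0, r0) \<in> supp g X\<close>] supp_pair_elem_subset[OF Xs k(3)]
        partner_neq[OF r02] partner_neq[OF k2] partner_partner[OF r02] partner_partner[OF k2]
      by auto
    finally have "supp g (?H r0 + ?H k) \<subseteq> supp g X" .
    moreover have "(r,s) \<in> supp g (?H r0 + ?H k)"
      using True r0 r02 k2 k(2) ks partner_less[OF r02] partner_less[OF k2]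
      by (auto simp: supp_def pair_elem_def partner_simps)
    moreover have "?H r0 + ?H k \<in> coinv_span g (Ysub g)"
      using cartan_sum_in_coinv_span_Ysub[OF r02 k2 k(2) ks] .
    ultimately show ?thesis using cartan_sum_Ysub[OF r0(1) k(1)] Ysub_add[OF X] by blast
  qed
qed

lemma sp2_subset_coinv_span:
  assumes g: "g \<ge> 2"
  shows "sp2 g \<subseteq> coinv_span g (sp2 g)"
proof (rule subset_coinv_span_by_descent[OF sp2_carrier])
  fix X r s assume X: "X \<in> sp2 g" and rs: "(r,s) \<in> supp g X"
  have r: "r < 2*g" and s: "s < 2*g" using rs by (auto simp: supp_def)
  show "\<exists>B \<in> coinv_span g (sp2 g). X + B \<in> sp2 g \<and> (r,s) \<in> supp g B \<and> supp g B \<subseteq> supp g X"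
  proof (cases "s = partner g r")
    case True
    have "(r,s) \<in> supp g (diag_elem g r) \<and> supp g (diag_elem g r) \<subseteq> supp g X"
      using True rs by (auto simp: supp_def diag_elem_def)
    then show ?thesis
      using diag_elem_in_coinv_span_sp2[OF g r] diag_elem_sp2[OF r] sp2_add[OF X] by blast
  next
    case n: False
    have "pair_elem g r (partner g s) \<in> coinv_span g (sp2 g)"
    proof (cases "s = r")
      case True
      then show ?thesis using cartan_elem_in_coinv_span_sp2[OF g r] by simp
    next
      case False
      then have "partner g s \<noteq> r" "partner g s \<noteq> partner g r" using n r s by (auto simp: partner_simps)
      then show ?thesis
        using coinv_span_mono[OF Ysub_sp2 pair_elem_in_coinv_span_Ysub[OF r partner_less[OF s]]] by blast
    qed
    then show ?thesis
      using supp_pair_elem_subset[OF X rs n] pair_elem_sp2[OF r partner_less[OF s]] sp2_add[OF X] by blast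
  qed
qed

lemma H0_conj_quot_zero_if_H0_conj_zero:
  assumes "H0_conj_zero g M" "M \<subseteq> carrier_mat (2*g) (2*g)" "0\<^sub>m (2*g) (2*g) \<in> N"
  shows "H0_conj_quot_zero g M N"
  unfolding H0_conj_quot_zero_def
proof
  fix X assume X: "X \<in> M"
  have "X - X = 0\<^sub>m (2*g) (2*g)" using X assms(2) by (intro eq_matI) auto
  moreover have "X \<in> coinv_span g M" using X assms(1) unfolding H0_conj_zero_def by blast
  ultimately show "\<exists>W \<in> coinv_span g M. X - W \<in> N"
    using assms(3) by (intro bexI[of _ X]) simp_all
qed

text \<open>If \<open>v\<^sub>k = 1\<close>, then \<open>\<omega>(v, e\<^sub>k\<^sub>') = 1\<close> and so \<open>T\<^sub>v e\<^sub>k\<^sub>' - e\<^sub>k\<^sub>' = v\<close>.\<close>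
lemma natural_module_H0_zero: "H0_U_zero g"
  unfolding H0_U_zero_def
proof
  fix v :: "bit vec" assume v: "v \<in> carrier_vec (2*g)"
  show "v \<in> f2_span (0\<^sub>v (2*g)) (nat_rel g)"
  proof (cases "\<forall>i<2*g. v $ i = 0")
    case True
    then have "v = 0\<^sub>v (2*g)" using v by (intro eq_vecI) auto
    then show ?thesis by (simp add: f2_span.zero)
  next
    case False
    then obtain k where k: "k < 2*g" "v $ k = 1" by auto
    define T where "T = transvection g (\<lambda>i. v $ i)"
    define w where "w = vec (2*g) (\<lambda>i. of_bool (i = partner g k) :: bit)"
    have w: "w \<in> carrier_vec (2*g)" by (simp add: w_def)
    have "T *\<^sub>v w - w = v"
    proof (rule eq_vecI)
      fix i assume "i < dim_vec v"
      then have i: "i < 2*g" using v by simp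
      have "(T *\<^sub>v w) $ i = (\<Sum>l<2*g. T $$ (i,l) * of_bool (l = partner g k))"
        using i by (simp add: T_def transvection_def w_def scalar_prod_def lessThan_atLeast0)
      also have "\<dots> = T $$ (i, partner g k)" by (rule sum_mult_delta[OF partner_less[OF k(1)]])
      also have "\<dots> = of_bool (i = partner g k) + v $ i"
        using i k partner_less[OF k(1)] by (simp add: T_def transvection_def partner_partner)
      finally show "(T *\<^sub>v w - w) $ i = v $ i"
        using i w by (simp add: T_def transvection_def w_def)
    qed (use v in \<open>auto simp: T_def transvection_def w_def\<close>)
    moreover have "T \<in> Sp2 g" unfolding T_def by (rule transvection_Sp2)
    ultimately have "v \<in> nat_rel g"
      unfolding nat_rel_def using w by blast
    then have "v + 0\<^sub>v (2*g) \<in> f2_span (0\<^sub>v (2*g)) (nat_rel g)" by (intro f2_span.add f2_span.zero)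
    then show ?thesis using v by simp
  qed
qed

theorem lemma5p5:
  shows "(\<forall>g::nat. g \<ge> 1 \<longrightarrow> H0_conj_zero g (Ysub g) \<and> H0_U_zero g)
       \<and> (\<forall>g::nat. g \<ge> 2 \<longrightarrow> H0_conj_quot_zero g (sp2 g) (Ysub g) \<and> H0_conj_zero g (sp2 g))"
proof (intro conjI allI impI)
  fix g :: nat
  show "H0_conj_zero g (Ysub g)"
    unfolding H0_conj_zero_def by (rule Ysub_subset_coinv_span)
  show "H0_U_zero g" by (rule natural_module_H0_zero)
next
  fix g :: nat assume "g \<ge> 2"
  then show sp: "H0_conj_zero g (sp2 g)"
    unfolding H0_conj_zero_def by (rule sp2_subset_coinv_span)
  then show "H0_conj_quot_zero g (sp2 g) (Ysub g)"
    by (rule H0_conj_quot_zero_if_H0_conj_zero[OF _ sp2_carrier zero_Ysub])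
qed

end
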